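(* Let $\mathcal{M}$ be an orientable, compact, boundaryless, connected Riemannian manifold with volume form $dV$, and let $\mu:\mathcal{M}\to\mathbb{R}_{>0}$ be a continuous probability density. Let $\epsilon>0$ satisfy $\epsilon<\min_{x\in\mathcal{M}}\mu(x)$ and let $\lambda\ge 1$. For a continuous function $\bar\mu:\mathcal{M}\to\mathbb{R}$ with $\int_{\mathcal{M}}\bar\mu\,dV=1$, define $\bar\mu_+(x)=\max\{\epsilon,\bar\mu(x)\}$, $\bar\mu_-(x)=\epsilon-\min\{\epsilon,\bar\mu(x)\}$, and $$\ell(\bar\mu) = -\mathbb{E}_{x\sim\mu}\log\bar\mu_+(x) + \lambda\int_{\mathcal{M}}\bar\mu_-\,dV.$$ Then, over the set of continuous functions $\bar\mu$ on $\mathcal{M}$ with $\int_{\mathcal{M}}\bar\mu\,dV=1$, the function $\bar\mu=\mu$ is a minimizer of $\ell$, and it is the unique minimizer.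
   Context: $\mathbb{E}_{x\sim\mu}f(x)=\int_{\mathcal{M}} f\mu\,dV$. Note $\bar\mu_+,\bar\mu_-\ge 0$ and $\bar\mu=\bar\mu_+-\bar\mu_-$. (In the paper $\bar\mu$ is of the form $\nu-\operatorname{div}(u)$, which automatically has integral one.) *)

theory Defs
  imports "HOL-Analysis.Analysis"
begin

text \<open>The volume measure dV of the manifold is modelled abstractly as a finite Borel
measure V on a compact connected subset M of a metric space, with full support.\<close>

definition mu_plus :: "real \<Rightarrow> ('a \<Rightarrow> real) \<Rightarrow> 'a \<Rightarrow> real" where
  "mu_plus eps f x = max eps (f x)"

definition mu_minus :: "real \<Rightarrow> ('a \<Rightarrow> real) \<Rightarrow> 'a \<Rightarrow> real" where
  "mu_minus eps f x = eps - min eps (f x)"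

text \<open>E_{x~mu} g(x) = integral of g * mu dV.\<close>
definition ell :: "'a measure \<Rightarrow> ('a \<Rightarrow> real) \<Rightarrow> real \<Rightarrow> real \<Rightarrow> ('a \<Rightarrow> real) \<Rightarrow> real" where
  "ell V mu eps lam f =
     - (\<integral>x. ln (mu_plus eps f x) * mu x \<partial>V) + lam * (\<integral>x. mu_minus eps f x \<partial>V)"

definition admissible :: "'a::topological_space set \<Rightarrow> 'a measure \<Rightarrow> ('a \<Rightarrow> real) \<Rightarrow> bool" where
  "admissible M V f \<longleftrightarrow> continuous_on M f \<and> (\<integral>x. f x \<partial>V) = 1"

end

theory Submission
  imports Defs
begin

text \<open>Write \<open>p = max \<epsilon> f\<close> and \<open>q = \<epsilon> - min \<epsilon> f\<close>, so that \<open>p = f + q\<close> and \<open>\<integral>p = 1 + \<integral>q\<close>.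
  The pointwise Gibbs inequality \<open>\<mu> ln p \<le> \<mu> ln \<mu> + p - \<mu>\<close> integrates to
  \<open>-\<integral>\<mu> ln p \<ge> -\<integral>\<mu> ln \<mu> - \<integral>q\<close>, hence
  \<open>\<ell>(f) = \<ell>(\<mu>) + (\<lambda> - 1) \<integral>q + D\<close> where \<open>D \<ge> 0\<close> is a generalised Kullback--Leibler
  divergence of \<open>p\<close> from \<open>\<mu>\<close>. Since \<open>\<lambda> \<ge> 1\<close>, \<open>\<mu>\<close> is a minimiser; at another minimiser
  \<open>D = 0\<close>, so the continuous nonnegative integrand of \<open>D\<close> vanishes on the support of the
  volume measure, i.e. everywhere, giving \<open>p = \<mu>\<close>, and \<open>f = \<mu>\<close> because \<open>\<mu> > \<epsilon>\<close>.\<close>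

definition kl_integrand :: "real \<Rightarrow> real \<Rightarrow> real" where
  "kl_integrand m p = ln m * m + p - m - ln p * m"

lemma kl_integrand_nonneg:
  assumes "0 < p" "0 < m"
  shows "0 \<le> kl_integrand m p"
proof -
  have "ln (p / m) \<le> p / m - 1"
    using assms by (intro ln_le_minus_one) simp
  then have "m * (ln p - ln m) \<le> p - m"
    using assms by (simp add: ln_div field_simps)
  then show ?thesis
    unfolding kl_integrand_def by (simp add: algebra_simps)
qed

lemma kl_integrand_eq_0_iff:
  assumes "0 < p" "0 < m"
  shows "kl_integrand m p = 0 \<longleftrightarrow> p = m"
proof
  assume "kl_integrand m p = 0"
  then have "ln (p / m) = p / m - 1"
    using assms unfolding kl_integrand_def by (simp add: ln_div field_simps)
  then have "p / m = 1"
    using assms by (intro ln_eq_minus_one) simp_all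
  then show "p = m"
    using assms by simp
qed (simp add: kl_integrand_def)

locale fully_supported_finite_measure = finite_measure V
  for V :: "'a::metric_space measure" +
  fixes M :: "'a set"
  assumes compact: "compact M"
    and sets_eq: "sets V = sets (restrict_space borel M)"
    and full_support: "\<And>U. open U \<Longrightarrow> U \<inter> M \<noteq> {} \<Longrightarrow> emeasure V (U \<inter> M) > 0"
begin

lemma space_eq: "space V = M"
  using sets_eq_imp_space_eq[OF sets_eq] by (simp add: space_restrict_space)

lemma integrable_continuous_on:
  fixes g :: "'a \<Rightarrow> real"
  assumes "continuous_on M g"
  shows "integrable V g"
proof -
  obtain B where "\<forall>y\<in>g ` M. norm y \<le> B"
    using compact_continuous_image[OF assms compact] compact_imp_bounded bounded_iff by metis
  moreover have "g \<in> borel_measurable V"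
    using measurable_cong_sets[OF sets_eq refl] borel_measurable_continuous_on_restrict[OF assms]
    by blast
  ultimately show ?thesis
    by (intro integrable_const_bound[where B = B]) (auto simp: space_eq)
qed

lemma continuous_on_AE_eq_0_imp_eq_0:
  fixes h :: "'a \<Rightarrow> real"
  assumes "continuous_on M h" "AE x in V. h x = 0" "x \<in> M"
  shows "h x = 0"
proof (rule ccontr)
  assume "h x \<noteq> 0"
  obtain U where U: "open U" "U \<inter> M = h -` (- {0}) \<inter> M"
    using assms(1) open_Compl[OF closed_singleton] unfolding continuous_on_open_invariant
    by metis
  have "U \<inter> M \<in> sets V"
    using U(1) by (auto simp: sets_eq sets_restrict_space)
  moreover have "AE y in V. y \<notin> U \<inter> M"
    using assms(2) by eventually_elim (use U(2) in auto)
  ultimately have "emeasure V (U \<inter> M) = 0"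
    using AE_iff_measurable[of "U \<inter> M" V "\<lambda>y. y \<notin> U \<inter> M"] by (auto simp: space_eq)
  moreover have "U \<inter> M \<noteq> {}"
    using U(2) assms(3) \<open>h x \<noteq> 0\<close> by auto
  ultimately show False
    using full_support[OF U(1)] by simp
qed

lemma continuous_on_integral_eq_0_imp_eq_0:
  fixes h :: "'a \<Rightarrow> real"
  assumes "continuous_on M h" "\<And>y. y \<in> M \<Longrightarrow> 0 \<le> h y" "(\<integral>y. h y \<partial>V) = 0" "x \<in> M"
  shows "h x = 0"
proof -
  have "AE y in V. 0 \<le> h y"
    using assms(2) by (auto simp: space_eq intro: AE_I2)
  then have "AE y in V. h y = 0"
    using integral_nonneg_eq_0_iff_AE[OF integrable_continuous_on[OF assms(1)]] assms(3) by blast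
  then show ?thesis
    using continuous_on_AE_eq_0_imp_eq_0 assms(1,4) by blast
qed

end

locale density_above_threshold = fully_supported_finite_measure V M
  for V :: "'a::metric_space measure" and M +
  fixes mu :: "'a \<Rightarrow> real" and eps :: real
  assumes mu_continuous: "continuous_on M mu"
    and mu_integral: "(\<integral>x. mu x \<partial>V) = 1"
    and eps_pos: "0 < eps"
    and eps_less_mu: "\<And>x. x \<in> M \<Longrightarrow> eps < mu x"
begin

lemma mu_pos: "x \<in> M \<Longrightarrow> 0 < mu x"
  using eps_pos eps_less_mu by force

lemma admissible_mu: "admissible M V mu"
  using mu_continuous mu_integral by (simp add: admissible_def)

lemma ell_mu: "ell V mu eps lam mu = - (\<integral>x. ln (mu x) * mu x \<partial>V)"
proof -
  have "mu_plus eps mu x = mu x" "mu_minus eps mu x = 0" if "x \<in> space V" for x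
    using eps_less_mu[of x] that by (simp_all add: space_eq mu_plus_def mu_minus_def)
  then have "(\<integral>x. ln (mu_plus eps mu x) * mu x \<partial>V) = (\<integral>x. ln (mu x) * mu x \<partial>V)"
    and "(\<integral>x. mu_minus eps mu x \<partial>V) = (\<integral>x. 0 \<partial>V)"
    by (simp_all cong: Bochner_Integration.integral_cong)
  then show ?thesis
    by (simp add: ell_def)
qed

lemma ell_decomposition:
  assumes "admissible M V f"
  shows "ell V mu eps lam f = ell V mu eps lam mu + (lam - 1) * (\<integral>x. mu_minus eps f x \<partial>V)
      + (\<integral>x. kl_integrand (mu x) (mu_plus eps f x) \<partial>V)"
proof -
  let ?p = "mu_plus eps f" and ?q = "mu_minus eps f"
  have f: "continuous_on M f" "(\<integral>x. f x \<partial>V) = 1"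
    using assms by (auto simp: admissible_def)
  have p_pos: "0 < ?p x" for x
    using eps_pos by (simp add: mu_plus_def)
  have p_eq: "?p x = f x + ?q x" for x
    by (simp add: mu_plus_def mu_minus_def max_def min_def)
  have p_cont: "continuous_on M ?p" and q_cont: "continuous_on M ?q"
    unfolding mu_plus_def mu_minus_def by (intro continuous_intros f)+
  have ln_mu_cont: "continuous_on M (\<lambda>x. ln (mu x) * mu x)"
    using mu_pos by (intro continuous_intros mu_continuous) force
  have ln_p_cont: "continuous_on M (\<lambda>x. ln (?p x) * mu x)"
    using p_pos by (intro continuous_intros mu_continuous p_cont) (simp add: less_imp_neq[symmetric])
  note integrable = integrable_continuous_on[OF f(1)] integrable_continuous_on[OF mu_continuous]
    integrable_continuous_on[OF p_cont] integrable_continuous_on[OF q_cont]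
    integrable_continuous_on[OF ln_mu_cont] integrable_continuous_on[OF ln_p_cont]
  have "(\<integral>x. ?p x \<partial>V) = 1 + (\<integral>x. ?q x \<partial>V)"
    using f(2) integrable by (simp add: p_eq)
  moreover have "(\<integral>x. kl_integrand (mu x) (?p x) \<partial>V) = (\<integral>x. ln (mu x) * mu x \<partial>V)
      + (\<integral>x. ?p x \<partial>V) - (\<integral>x. mu x \<partial>V) - (\<integral>x. ln (?p x) * mu x \<partial>V)"
    unfolding kl_integrand_def using integrable by simp
  ultimately show ?thesis
    unfolding ell_mu using mu_integral by (simp add: ell_def algebra_simps)
qed

lemma continuous_on_kl_integrand_mu_plus:
  assumes "admissible M V f"
  shows "continuous_on M (\<lambda>x. kl_integrand (mu x) (mu_plus eps f x))"
  using assms eps_pos unfolding admissible_def kl_integrand_def mu_plus_def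
  by (intro continuous_intros mu_continuous) (auto dest: mu_pos)

lemma integral_kl_integrand_mu_plus_nonneg:
  "0 \<le> (\<integral>x. kl_integrand (mu x) (mu_plus eps f x) \<partial>V)"
  using mu_pos eps_pos
  by (intro integral_nonneg_AE AE_I2 kl_integrand_nonneg) (auto simp: space_eq mu_plus_def)

lemma integral_mu_minus_nonneg: "0 \<le> (\<integral>x. mu_minus eps f x \<partial>V)"
  by (simp add: mu_minus_def)

lemma ell_mu_le:
  assumes "admissible M V f" "1 \<le> lam"
  shows "ell V mu eps lam mu \<le> ell V mu eps lam f"
  using ell_decomposition[OF assms(1)] integral_kl_integrand_mu_plus_nonneg[of f]
    integral_mu_minus_nonneg[of f] assms(2)
  by (smt (verit) mult_nonneg_nonneg)

lemma ell_le_ell_mu_imp_eq: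
  assumes "admissible M V f" "1 \<le> lam" "ell V mu eps lam f \<le> ell V mu eps lam mu" "x \<in> M"
  shows "f x = mu x"
proof -
  have "(\<integral>x. kl_integrand (mu x) (mu_plus eps f x) \<partial>V) = 0"
    using ell_decomposition[OF assms(1)] integral_kl_integrand_mu_plus_nonneg[of f]
      integral_mu_minus_nonneg[of f] assms(2,3)
    by (smt (verit) mult_nonneg_nonneg)
  moreover have "0 \<le> kl_integrand (mu y) (mu_plus eps f y)" if "y \<in> M" for y
    using mu_pos[OF that] eps_pos by (intro kl_integrand_nonneg) (simp_all add: mu_plus_def)
  ultimately have "kl_integrand (mu x) (mu_plus eps f x) = 0"
    using continuous_on_integral_eq_0_imp_eq_0[OF continuous_on_kl_integrand_mu_plus[OF assms(1)]]
      assms(4) by blast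
  then have "max eps (f x) = mu x"
    using mu_pos[OF assms(4)] eps_pos by (simp add: kl_integrand_eq_0_iff mu_plus_def)
  then show ?thesis
    using eps_less_mu[OF assms(4)] by (auto simp: max_def split: if_splits)
qed

end

theorem theorem2:
  fixes M :: "'a::metric_space set" and V :: "'a measure"
    and mu :: "'a \<Rightarrow> real" and eps lam :: real
  assumes "compact M" and "connected M"
    and "sets V = sets (restrict_space borel M)"
    and "finite_measure V"
    and "\<And>U. open U \<Longrightarrow> U \<inter> M \<noteq> {} \<Longrightarrow> emeasure V (U \<inter> M) > 0"
    and "continuous_on M mu" and "\<And>x. x \<in> M \<Longrightarrow> mu x > 0"
    and "(\<integral>x. mu x \<partial>V) = 1"
    and "eps > 0" and "\<And>x. x \<in> M \<Longrightarrow> eps < mu x"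
    and "lam \<ge> 1"
  shows "admissible M V mu
    \<and> (\<forall>f. admissible M V f \<longrightarrow> ell V mu eps lam mu \<le> ell V mu eps lam f)
    \<and> (\<forall>f. admissible M V f \<and> (\<forall>g. admissible M V g \<longrightarrow> ell V mu eps lam f \<le> ell V mu eps lam g)
           \<longrightarrow> (\<forall>x\<in>M. f x = mu x))"
proof -
  interpret density_above_threshold V M mu eps
    by (intro density_above_threshold.intro fully_supported_finite_measure.intro
        fully_supported_finite_measure_axioms.intro density_above_threshold_axioms.intro)
      (use assms in simp_all)
  show ?thesis
  proof (intro conjI allI impI ballI admissible_mu)
    show "ell V mu eps lam mu \<le> ell V mu eps lam f" if "admissible M V f" for f
      using ell_mu_le[OF that \<open>lam \<ge> 1\<close>] .
  next
    fix f x
    assume "admissible M V f \<and> (\<forall>g. admissible M V g \<longrightarrow> ell V mu eps lam f \<le> ell V mu eps lam g)"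
      and "x \<in> M"
    then show "f x = mu x"
      using ell_le_ell_mu_imp_eq admissible_mu \<open>lam \<ge> 1\<close> by blast
  qed
qed

end
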